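(* Fix $0<s\le1$ and let $\rho(s):=e^s/s$. Suppose that for some $\chi$, $G$ is a tight $(\rho(s),\chi)$-bidding profile induced by an integrable function $\phi:(0,1]\to[1,\infty)$. Then \[ \chi\ge e^s\int_0^1 e^{-sx}\phi(x)\,\mathrm{d} x . \]
   Context: Given $1<\chi\le\rho$, a $(\rho,\chi)$-bidding profile is a non-decreasing, left-continuous $G:\mathbb{R}\to(0,\infty)$ with (offset) $G(x)<1$ for $x<0$ and $G(x)\ge1$ for $x>0$; (robustness) $\int_{-\infty}^{x+1}G(t)\,\mathrm{d} t\le\rho G(x)$ for all $x\in\mathbb{R}$; (consistency) $\int_{-\infty}^1G(t)\,\mathrm{d} t\le\chi$. It is tight if additionally $\int_{-\infty}^{x+1}G(t)\,\mathrm{d} t=\rho G(x)$ for all $x\le0$ and $\int_{-\infty}^1G(t)\,\mathrm{d} t=\chi$. It is induced by $\phi:(0,1]\to[1,\infty)$ if $G|_{(0,1]}\equiv\phi$. *)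

theory Defs
  imports "HOL-Analysis.Analysis"
begin

definition lower_int :: "(real \<Rightarrow> real) \<Rightarrow> real \<Rightarrow> ennreal" where
  "lower_int G a = (\<integral>\<^sup>+ t. ennreal (G t) * indicator {..a} t \<partial>lborel)"

definition bidding_profile :: "real \<Rightarrow> real \<Rightarrow> (real \<Rightarrow> real) \<Rightarrow> bool" where
  "bidding_profile \<rho> chi G \<longleftrightarrow>
     1 < chi \<and> chi \<le> \<rho> \<and>
     mono G \<and> (\<forall>x. continuous (at_left x) G) \<and> (\<forall>x. 0 < G x) \<and>
     (\<forall>x<0. G x < 1) \<and> (\<forall>x>0. 1 \<le> G x) \<and>
     (\<forall>x. lower_int G (x + 1) \<le> ennreal (\<rho> * G x)) \<and>
     lower_int G 1 \<le> ennreal chi"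

definition tight_bidding_profile :: "real \<Rightarrow> real \<Rightarrow> (real \<Rightarrow> real) \<Rightarrow> bool" where
  "tight_bidding_profile \<rho> chi G \<longleftrightarrow>
     bidding_profile \<rho> chi G \<and>
     (\<forall>x\<le>0. lower_int G (x + 1) = ennreal (\<rho> * G x)) \<and>
     lower_int G 1 = ennreal chi"

definition induced_by :: "(real \<Rightarrow> real) \<Rightarrow> (real \<Rightarrow> real) \<Rightarrow> bool" where
  "induced_by G \<phi> \<longleftrightarrow> (\<forall>x\<in>{0<..1}. G x = \<phi> x)"

end

theory Submission
  imports Defs
begin

text \<open>Write \<open>I x\<close> for the integral of \<open>G\<close> over \<open>(-\<infinity>, x]\<close> and \<open>u x = exp (- s x) I x\<close>.
  Tightness, \<open>I (x + 1) = (exp s / s) G x\<close> for \<open>x \<le> 0\<close>, turns into the delay equation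
  \<open>u' x = s (u (x + 1) - u x)\<close> for \<open>x < 0\<close>; hence \<open>s\<close> times the integral of \<open>u\<close> over
  \<open>[t, t + 1]\<close>, minus \<open>u t\<close>, is a constant \<open>c\<close> for \<open>t \<le> 0\<close>. Since \<open>u \<ge> 0\<close> and \<open>s \<le> 1\<close>,
  a positive \<open>c\<close> would drive \<open>u\<close> below zero far to the left, so \<open>c \<le> 0\<close>. Integrating by parts,
  the integral of \<open>exp (- s x) G x\<close> over \<open>[0, 1]\<close> equals \<open>exp (- s) \<chi> + c \<le> exp (- s) \<chi>\<close>.\<close>

lemma has_integral_Ioc_iff_Icc:
  fixes f :: "real \<Rightarrow> 'a::banach"
  shows "(f has_integral y) {a<..b} \<longleftrightarrow> (f has_integral y) {a..b}"
  by (rule has_integral_spike_set_eq; rule negligible_subset[of "{a}"]) auto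

lemma integral_Ioc_eq_Icc:
  fixes f :: "real \<Rightarrow> 'a::banach"
  shows "integral {a<..b} f = integral {a..b} f"
  unfolding integral_def by (simp add: has_integral_Ioc_iff_Icc integrable_on_def)

lemma nn_integral_Ioc_eq_integral:
  fixes G :: "real \<Rightarrow> real"
  assumes "G integrable_on {a..b}" "\<And>x. x \<in> {a<..b} \<Longrightarrow> 0 \<le> G x"
  shows "(\<integral>\<^sup>+t. ennreal (G t) * indicator {a<..b} t \<partial>lborel) = ennreal (integral {a..b} G)"
  using assms by (intro nn_integral_has_integral_lebesgue') (auto simp: has_integral_Ioc_iff_Icc)

lemma nn_integral_Ioc_imp_has_integral:
  fixes f :: "real \<Rightarrow> real"
  assumes "f \<in> borel_measurable borel" "\<And>x. x \<in> {a<..b} \<Longrightarrow> 0 \<le> f x"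
    and "(\<integral>\<^sup>+x. ennreal (f x) * indicator {a<..b} x \<partial>lborel) = ennreal r" "0 \<le> r"
  shows "(f has_integral r) {a..b}"
proof -
  have "(\<integral>\<^sup>+x. ennreal (f x * indicator {a<..b} x) \<partial>lborel) = (\<integral>\<^sup>+x. ennreal (f x) * indicator {a<..b} x \<partial>lborel)"
    by (intro nn_integral_cong) (simp add: indicator_def)
  then have "(\<integral>\<^sup>+x. ennreal (f x * indicator {a<..b} x) \<partial>lborel) = ennreal r"
    using assms(3) by simp
  then have "((\<lambda>x. f x * indicator {a<..b} x) has_integral r) UNIV"
    using assms by (intro nn_integral_has_integral) (auto simp: indicator_def)
  moreover have "(\<lambda>x. f x * indicator {a<..b} x) = (\<lambda>x. if x \<in> {a<..b} then f x else 0)"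
    by (simp add: fun_eq_iff indicator_def)
  ultimately have "(f has_integral r) {a<..b}"
    by (metis has_integral_restrict_UNIV)
  then show ?thesis
    by (simp add: has_integral_Ioc_iff_Icc)
qed

lemma set_integrable_mult_bounded:
  fixes f g :: "'a \<Rightarrow> real"
  assumes f: "set_integrable M A f"
    and g: "g \<in> borel_measurable M"
    and bound: "\<And>x. x \<in> A \<Longrightarrow> \<bar>g x\<bar> \<le> C"
  shows "set_integrable M A (\<lambda>x. g x * f x)"
proof (rule set_integrable_bound[OF set_integrable_mult_right[of C, OF f]])
  have "(\<lambda>x. indicator A x *\<^sub>R f x) \<in> borel_measurable M"
    using f unfolding set_integrable_def by (rule borel_measurable_integrable)
  then have "(\<lambda>x. g x * (indicator A x *\<^sub>R f x)) \<in> borel_measurable M"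
    using g by measurable
  then show "set_borel_measurable M A (\<lambda>x. g x * f x)"
    unfolding set_borel_measurable_def by (simp add: mult.left_commute)
  have "\<bar>g x\<bar> * \<bar>f x\<bar> \<le> \<bar>C\<bar> * \<bar>f x\<bar>" if "x \<in> A" for x
    using bound[OF that] by (intro mult_right_mono) auto
  then show "AE x in M. x \<in> A \<longrightarrow> norm (g x * f x) \<le> norm (C * f x)"
    by (simp add: abs_mult)
qed

section \<open>Integration by parts against a nonincreasing weight\<close>

lemma nn_integral_triangle_swap:
  fixes f g :: "real \<Rightarrow> ennreal" and a b :: real
  assumes [measurable]: "f \<in> borel_measurable borel" "g \<in> borel_measurable borel"
  shows "(\<integral>\<^sup>+t. g t * (\<integral>\<^sup>+x. f x * indicator {t..b} x \<partial>lborel) * indicator {a<..b} t \<partial>lborel)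
       = (\<integral>\<^sup>+x. f x * (\<integral>\<^sup>+t. g t * indicator {a<..x} t \<partial>lborel) * indicator {a..b} x \<partial>lborel)"
proof -
  define S where "S = {p. a < snd p \<and> snd p \<le> fst p \<and> fst p \<le> b}"
  have [measurable]: "S \<in> sets (lborel \<Otimes>\<^sub>M lborel)"
  proof -
    have "Measurable.pred (lborel \<Otimes>\<^sub>M lborel) (\<lambda>p. a < snd p \<and> snd p \<le> fst p \<and> fst p \<le> b)"
      by measurable
    then show ?thesis
      by (simp add: S_def pred_def space_pair_measure)
  qed
  have "(\<integral>\<^sup>+t. (\<integral>\<^sup>+x. f x * g t * indicator S (x, t) \<partial>lborel) \<partial>lborel)
      = (\<integral>\<^sup>+x. (\<integral>\<^sup>+t. f x * g t * indicator S (x, t) \<partial>lborel) \<partial>lborel)"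
    by (rule lborel_pair.Fubini') measurable
  moreover have "(\<integral>\<^sup>+x. f x * g t * indicator S (x, t) \<partial>lborel)
      = g t * (\<integral>\<^sup>+x. f x * indicator {t..b} x \<partial>lborel) * indicator {a<..b} t" for t
  proof -
    have "(\<integral>\<^sup>+x. f x * g t * indicator S (x, t) \<partial>lborel)
        = (\<integral>\<^sup>+x. (g t * indicator {a<..b} t) * (f x * indicator {t..b} x) \<partial>lborel)"
      by (intro nn_integral_cong) (auto simp: S_def indicator_def mult_ac)
    also have "\<dots> = (g t * indicator {a<..b} t) * (\<integral>\<^sup>+x. f x * indicator {t..b} x \<partial>lborel)"
      by (rule nn_integral_cmult) measurable
    finally show ?thesis
      by (simp only: mult_ac)
  qed
  moreover have "(\<integral>\<^sup>+t. f x * g t * indicator S (x, t) \<partial>lborel)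
      = f x * (\<integral>\<^sup>+t. g t * indicator {a<..x} t \<partial>lborel) * indicator {a..b} x" for x
  proof -
    have "(\<integral>\<^sup>+t. f x * g t * indicator S (x, t) \<partial>lborel)
        = (\<integral>\<^sup>+t. (f x * indicator {a..b} x) * (g t * indicator {a<..x} t) \<partial>lborel)"
      by (intro nn_integral_cong) (auto simp: S_def indicator_def mult_ac)
    also have "\<dots> = (f x * indicator {a..b} x) * (\<integral>\<^sup>+t. g t * indicator {a<..x} t \<partial>lborel)"
      by (rule nn_integral_cmult) measurable
    finally show ?thesis
      by (simp only: mult_ac)
  qed
  ultimately show ?thesis
    by simp
qed

lemma nn_integral_by_parts_vanishing_weight:
  fixes G w w' :: "real \<Rightarrow> real"
  assumes [measurable]: "G \<in> borel_measurable borel"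
    and G_nonneg: "\<And>x. x \<in> {a..b} \<Longrightarrow> 0 \<le> G x"
    and G_int: "G integrable_on {a..b}"
    and w_deriv: "\<And>x. (w has_real_derivative w' x) (at x)"
    and w'_cont: "continuous_on UNIV w'"
    and w'_nonpos: "\<And>x. x \<in> {a..b} \<Longrightarrow> w' x \<le> 0"
  shows "(\<integral>\<^sup>+t. ennreal (G t * (w t - w b)) * indicator {a<..b} t \<partial>lborel)
    = ennreal (integral {a..b} (\<lambda>x. - w' x * integral {a..x} G))"
proof -
  have [measurable]: "w' \<in> borel_measurable borel"
    using w'_cont by (rule borel_measurable_continuous_onI)
  have inner_x: "ennreal (G t * (w t - w b)) * indicator {a<..b} t
      = ennreal (G t) * (\<integral>\<^sup>+x. ennreal (- w' x) * indicator {t..b} x \<partial>lborel) * indicator {a<..b} t" for t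
  proof (cases "t \<in> {a<..b}")
    case True
    have "((\<lambda>x. - w x) has_real_derivative - w' x) (at x within {t..b})" for x
      by (rule DERIV_minus, rule has_field_derivative_at_within, rule w_deriv)
    then have "((\<lambda>x. - w' x) has_integral (w t - w b)) {t..b}"
      using fundamental_theorem_of_calculus[of t b "\<lambda>x. - w x" "\<lambda>x. - w' x"] True
      by (simp add: has_real_derivative_iff_has_vector_derivative)
    then have "(\<integral>\<^sup>+x. ennreal (- w' x) * indicator {t..b} x \<partial>lborel) = ennreal (w t - w b)"
      using True w'_nonpos by (intro nn_integral_has_integral_lebesgue') auto
    then show ?thesis
      using True G_nonneg[of t] by (simp add: ennreal_mult')
  qed simp
  have inner_t: "ennreal (- w' x * integral {a..x} G) * indicator {a..b} x
      = ennreal (- w' x) * (\<integral>\<^sup>+t. ennreal (G t) * indicator {a<..x} t \<partial>lborel) * indicator {a..b} x" for x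
  proof (cases "x \<in> {a..b}")
    case True
    then have "(\<integral>\<^sup>+t. ennreal (G t) * indicator {a<..x} t \<partial>lborel) = ennreal (integral {a..x} G)"
      using G_nonneg by (intro nn_integral_Ioc_eq_integral integrable_on_subinterval[OF G_int]) auto
    then show ?thesis
      using True w'_nonpos[of x] ennreal_mult'[of "- w' x" "integral {a..x} G"] by simp
  qed simp
  have "(\<lambda>x. - w' x * integral {a..x} G) integrable_on {a..b}"
    by (intro integrable_continuous_interval continuous_intros indefinite_integral_continuous_1 G_int
        continuous_on_subset[OF w'_cont]) auto
  then have outer: "(\<integral>\<^sup>+x. ennreal (- w' x * integral {a..x} G) * indicator {a..b} x \<partial>lborel)
      = ennreal (integral {a..b} (\<lambda>x. - w' x * integral {a..x} G))"
  proof (intro nn_integral_has_integral_lebesgue' integrable_integral)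
    fix x assume "x \<in> {a..b}"
    then have "0 \<le> integral {a..x} G"
      using G_nonneg by (intro integral_nonneg integrable_on_subinterval[OF G_int]) auto
    then show "0 \<le> - w' x * integral {a..x} G"
      using w'_nonpos[OF \<open>x \<in> {a..b}\<close>] by (simp add: mult_nonpos_nonneg)
  qed
  show ?thesis
    unfolding inner_x nn_integral_triangle_swap[of "\<lambda>x. ennreal (- w' x)" "\<lambda>t. ennreal (G t)", simplified]
      inner_t[symmetric] outer ..
qed

lemma integration_by_parts_nonincreasing_weight_indefinite:
  fixes G w w' :: "real \<Rightarrow> real"
  assumes G_meas [measurable]: "G \<in> borel_measurable borel"
    and G_nonneg: "\<And>x. x \<in> {a..b} \<Longrightarrow> 0 \<le> G x"
    and G_int: "G integrable_on {a..b}"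
    and w_deriv: "\<And>x. (w has_real_derivative w' x) (at x)"
    and w'_cont: "continuous_on UNIV w'"
    and w'_nonpos: "\<And>x. x \<in> {a..b} \<Longrightarrow> w' x \<le> 0"
    and "0 \<le> w b"
  shows "((\<lambda>x. w x * G x) has_integral
           w b * integral {a..b} G + integral {a..b} (\<lambda>x. - w' x * integral {a..x} G)) {a..b}"
proof -
  define P where "P = integral {a..b} (\<lambda>x. - w' x * integral {a..x} G)"
  have [measurable]: "w \<in> borel_measurable borel"
    using w_deriv DERIV_isCont
    by (intro borel_measurable_continuous_onI continuous_at_imp_continuous_on) blast
  have w_decr: "w b \<le> w t" if "t \<in> {a..b}" for t
    using that w_deriv w'_nonpos
    by (intro DERIV_nonpos_imp_nonincreasing[of t b w]) (auto intro: order_trans)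
  have G_int_nonneg: "0 \<le> integral {a..x} G" if "x \<in> {a..b}" for x
    using that G_nonneg by (intro integral_nonneg integrable_on_subinterval[OF G_int]) auto
  have "0 \<le> integral {a..b} G"
    using G_nonneg by (intro integral_nonneg G_int) auto
  have "(\<lambda>x. - w' x * integral {a..x} G) integrable_on {a..b}"
    by (intro integrable_continuous_interval continuous_intros indefinite_integral_continuous_1 G_int
        continuous_on_subset[OF w'_cont]) auto
  then have "0 \<le> P"
    unfolding P_def using G_int_nonneg w'_nonpos by (intro integral_nonneg) (auto simp: mult_nonpos_nonneg)
  have "ennreal (w t * G t) * indicator {a<..b} t
      = ennreal (G t * (w t - w b)) * indicator {a<..b} t + ennreal (w b) * (ennreal (G t) * indicator {a<..b} t)"
    for t
    using G_nonneg[of t] w_decr[of t] \<open>0 \<le> w b\<close> mult_left_mono[of "w b" "w t" "G t"]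
    by (cases "t \<in> {a<..b}")
      (simp_all add: ennreal_mult[symmetric] ennreal_plus[symmetric] algebra_simps del: ennreal_plus)
  then have "(\<integral>\<^sup>+t. ennreal (w t * G t) * indicator {a<..b} t \<partial>lborel)
      = ennreal P + ennreal (w b) * ennreal (integral {a..b} G)"
    using nn_integral_by_parts_vanishing_weight[OF assms(1-6)] nn_integral_Ioc_eq_integral[OF G_int] G_nonneg
    by (simp add: nn_integral_add nn_integral_cmult P_def)
  also have "\<dots> = ennreal (w b * integral {a..b} G + P)"
    using \<open>0 \<le> P\<close> \<open>0 \<le> integral {a..b} G\<close> \<open>0 \<le> w b\<close>
    by (simp add: ennreal_mult[symmetric] ennreal_plus[symmetric] del: ennreal_plus)
  finally have "(\<integral>\<^sup>+t. ennreal (w t * G t) * indicator {a<..b} t \<partial>lborel)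
      = ennreal (w b * integral {a..b} G + P)" .
  moreover have "0 \<le> w t * G t" if "t \<in> {a<..b}" for t
    using G_nonneg[of t] w_decr[of t] that \<open>0 \<le> w b\<close> by simp
  ultimately show ?thesis
    unfolding P_def[symmetric] using \<open>0 \<le> P\<close> \<open>0 \<le> integral {a..b} G\<close> \<open>0 \<le> w b\<close>
    by (intro nn_integral_Ioc_imp_has_integral) auto
qed

lemma integration_by_parts_nonincreasing_weight:
  fixes G F w w' :: "real \<Rightarrow> real"
  assumes "a \<le> b"
    and "G \<in> borel_measurable borel"
    and "\<And>x. x \<in> {a..b} \<Longrightarrow> 0 \<le> G x"
    and G_int: "G integrable_on {a..b}"
    and primitive: "\<And>x. x \<in> {a..b} \<Longrightarrow> F x = F a + integral {a..x} G"
    and w_deriv: "\<And>x. (w has_real_derivative w' x) (at x)"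
    and w'_cont: "continuous_on UNIV w'"
    and "\<And>x. x \<in> {a..b} \<Longrightarrow> w' x \<le> 0"
    and "0 \<le> w b"
  shows "((\<lambda>x. w x * G x) has_integral w b * F b - w a * F a - integral {a..b} (\<lambda>x. w' x * F x)) {a..b}"
proof -
  have "(w has_real_derivative w' x) (at x within {a..b})" for x
    by (rule has_field_derivative_at_within[OF w_deriv])
  then have "(w' has_integral w b - w a) {a..b}"
    using fundamental_theorem_of_calculus[OF \<open>a \<le> b\<close>, of w w']
    by (simp add: has_real_derivative_iff_has_vector_derivative)
  moreover have "(\<lambda>x. w' x * integral {a..x} G) integrable_on {a..b}"
    by (intro integrable_continuous_interval continuous_intros indefinite_integral_continuous_1 G_int
        continuous_on_subset[OF w'_cont]) auto
  ultimately have "((\<lambda>x. F a * w' x + w' x * integral {a..x} G) has_integral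
      F a * (w b - w a) + integral {a..b} (\<lambda>x. w' x * integral {a..x} G)) {a..b}"
    by (intro has_integral_add has_integral_mult_right integrable_integral)
  then have "((\<lambda>x. w' x * F x) has_integral
      F a * (w b - w a) + integral {a..b} (\<lambda>x. w' x * integral {a..x} G)) {a..b}"
    by (rule has_integral_eq[rotated]) (metis primitive distrib_left mult.commute)
  then have "integral {a..b} (\<lambda>x. w' x * F x)
      = F a * (w b - w a) + integral {a..b} (\<lambda>x. w' x * integral {a..x} G)"
    by (rule integral_unique)
  moreover have "F b = F a + integral {a..b} G"
    by (rule primitive) (use \<open>a \<le> b\<close> in simp)
  ultimately show ?thesis
    using integration_by_parts_nonincreasing_weight_indefinite[OF assms(2-4,6-9)]
    by (simp add: algebra_simps)
qed

section \<open>A delay equation\<close>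

lemma delay_equation_window_integral_invariant:
  fixes u :: "real \<Rightarrow> real" and s t :: real
  assumes cont: "\<And>L. continuous_on {L..1} u"
    and deriv: "\<And>x. x < 0 \<Longrightarrow> (u has_real_derivative s * (u (x + 1) - u x)) (at x)"
    and "t \<le> 0"
  shows "s * integral {t..t+1} u - u t = s * integral {0..1} u - u 0"
proof (cases "t = 0")
  case False
  with \<open>t \<le> 0\<close> have "t < 0" by simp
  define V where "V y = integral {t..y} u" for y
  define k where "k y = s * (V (y + 1) - V y) - u y" for y
  have window: "integral {y..y+1} u = V (y + 1) - V y" if "y \<in> {t..0}" for y
  proof -
    have "u integrable_on {t..y+1}"
      by (intro integrable_continuous_interval continuous_on_subset[OF cont[of t]]) (use that in auto)
    then show ?thesis
      using Henstock_Kurzweil_Integration.integral_combine[of t y "y + 1" u] that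
      by (simp add: V_def)
  qed
  have V_cont: "continuous_on {t..1} V"
    unfolding V_def by (intro indefinite_integral_continuous_1 integrable_continuous_interval cont)
  have V_deriv: "(V has_real_derivative u y) (at y)" if "t < y" "y < 1" for y
  proof -
    have "(V has_real_derivative u y) (at y within {t..1})"
      unfolding V_def using that by (intro integral_has_real_derivative cont) auto
    moreover have "y \<in> interior {t..1}"
      using that by simp
    ultimately show ?thesis
      by (metis at_within_interior)
  qed
  have "k 0 = k t"
  proof (rule DERIV_isconst_end[of t 0 k])
    show "continuous_on {t..0} k"
      unfolding k_def
      by (intro continuous_intros continuous_on_compose2[OF V_cont] continuous_on_subset[OF V_cont]
          continuous_on_subset[OF cont[of t]]) auto
    show "(k has_real_derivative 0) (at y)" if "t < y" "y < 0" for y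
    proof -
      have "((\<lambda>y. V (y + 1)) has_real_derivative u (y + 1)) (at y)"
        using V_deriv[of "y + 1"] that \<open>t < 0\<close> by (simp add: DERIV_shift)
      then have "(k has_real_derivative s * (u (y + 1) - u y) - s * (u (y + 1) - u y)) (at y)"
        unfolding k_def using that
        by (intro DERIV_diff DERIV_cmult V_deriv deriv) auto
      then show ?thesis by simp
    qed
  qed (use \<open>t < 0\<close> in auto)
  then show ?thesis
    using window[of t] window[of 0] \<open>t < 0\<close> by (simp add: k_def)
qed simp

lemma window_integral_excess_nonpos_at_max:
  fixes u :: "real \<Rightarrow> real" and s c m :: real
  assumes "s \<le> 1"
    and cont: "continuous_on {m..m+1} u"
    and nonneg: "\<And>x. x \<in> {m..m+1} \<Longrightarrow> 0 \<le> u x"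
    and window: "s * integral {m..m+1} u = u m + c"
    and max: "\<And>x. x \<in> {m..m+1} \<Longrightarrow> u x - c / 2 * x \<le> u m - c / 2 * m"
  shows "c \<le> 0"
proof (rule ccontr)
  assume "\<not> c \<le> 0"
  have u_int: "u integrable_on {m..m+1}"
    by (rule integrable_continuous_interval[OF cont])
  have "u x \<le> u m + c / 2" if "x \<in> {m..m+1}" for x
  proof -
    have "u x \<le> u m + c / 2 * (x - m)"
      using max[OF that] by (simp add: field_simps)
    also have "\<dots> \<le> u m + c / 2"
      using that \<open>\<not> c \<le> 0\<close> by (intro add_left_mono mult_left_le) auto
    finally show ?thesis .
  qed
  then have "integral {m..m+1} u \<le> integral {m..m+1} (\<lambda>_. u m + c / 2)"
    by (intro integral_le u_int) auto
  moreover have "0 \<le> integral {m..m+1} u"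
    using nonneg by (intro integral_nonneg u_int) auto
  then have "u m + c \<le> integral {m..m+1} u"
    using window \<open>s \<le> 1\<close> by (metis mult_left_le_one_le mult_nonpos_nonneg nle_le order_trans)
  ultimately show False
    using \<open>\<not> c \<le> 0\<close> by simp
qed

lemma window_integral_excess_nonpos:
  fixes u :: "real \<Rightarrow> real" and s c :: real
  assumes "s \<le> 1"
    and cont: "\<And>L. continuous_on {L..1} u"
    and nonneg: "\<And>x. x \<le> 1 \<Longrightarrow> 0 \<le> u x"
    and window: "\<And>t. t \<le> 0 \<Longrightarrow> s * integral {t..t+1} u = u t + c"
  shows "c \<le> 0"
proof (rule ccontr)
  assume "\<not> c \<le> 0"
  then have "c > 0" by simp
  obtain B where B: "\<And>x. x \<in> {0..1} \<Longrightarrow> u x \<le> B" "0 \<le> B"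
  proof -
    have "bounded (u ` {0..1})"
      by (intro compact_imp_bounded compact_continuous_image cont) simp
    then obtain B where "\<And>x. x \<in> {0..1} \<Longrightarrow> \<bar>u x\<bar> \<le> B"
      unfolding bounded_real by blast
    then show ?thesis
      using that[of B] by fastforce
  qed
  \<comment> \<open>\<open>t0\<close> is chosen so that \<open>B + c t0 / 2 = - c / 2\<close>. The maximum of \<open>u x - c x / 2\<close>
      on \<open>[t0, 1]\<close> cannot lie in \<open>[t0, 0]\<close>, and comparing it with the value at \<open>t0\<close> makes \<open>u t0\<close> negative.\<close>
  define t0 where "t0 = - 2 * B / c - 1"
  have "t0 \<le> -1"
    using B(2) \<open>c > 0\<close> by (simp add: t0_def)
  define g where "g x = u x - c / 2 * x" for x
  obtain m where m: "m \<in> {t0..1}" "\<And>y. y \<in> {t0..1} \<Longrightarrow> g y \<le> g m"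
    using continuous_attains_sup[of "{t0..1}" g] \<open>t0 \<le> -1\<close>
    unfolding g_def by (fastforce intro: continuous_intros cont)
  have "m > 0"
  proof (rule ccontr)
    assume "\<not> m > 0"
    then have "c \<le> 0"
      using m \<open>t0 \<le> -1\<close>
      by (intro window_integral_excess_nonpos_at_max[where c = c, OF \<open>s \<le> 1\<close>
          continuous_on_subset[OF cont[of m]]] nonneg window) (auto simp: g_def)
    with \<open>c > 0\<close> show False
      by simp
  qed
  then have "g m \<le> B"
    using m(1) B(1)[of m] \<open>c > 0\<close> unfolding g_def
    by (smt (verit) atLeastAtMost_iff divide_pos_pos mult_pos_pos)
  moreover have "g t0 \<le> g m"
    using m \<open>t0 \<le> -1\<close> by auto
  ultimately have "u t0 \<le> B + c / 2 * t0"
    by (simp add: g_def)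
  also have "\<dots> = - c / 2"
    using \<open>c > 0\<close> by (simp add: t0_def algebra_simps)
  finally show False
    using nonneg[of t0] \<open>t0 \<le> -1\<close> \<open>c > 0\<close> by simp
qed

lemma delay_equation_window_integral_le:
  fixes u :: "real \<Rightarrow> real" and s :: real
  assumes "s \<le> 1"
    and "\<And>L. continuous_on {L..1} u"
    and "\<And>x. x \<le> 1 \<Longrightarrow> 0 \<le> u x"
    and "\<And>x. x < 0 \<Longrightarrow> (u has_real_derivative s * (u (x + 1) - u x)) (at x)"
  shows "s * integral {0..1} u \<le> u 0"
  using window_integral_excess_nonpos[OF assms(1-3), of "s * integral {0..1} u - u 0"]
    delay_equation_window_integral_invariant[OF assms(2,4)]
  by (simp add: algebra_simps)

section \<open>The cumulative integral of a tight bidding profile\<close>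

lemma mono_integrable_on_interval:
  fixes G :: "real \<Rightarrow> real"
  shows "mono G \<Longrightarrow> G integrable_on {a..b}"
  by (rule integrable_on_mono_on[OF mono_imp_mono_on])

lemma lower_int_add_integral:
  fixes G :: "real \<Rightarrow> real"
  assumes "mono G" "\<And>x. 0 \<le> G x" "a \<le> b"
  shows "lower_int G b = lower_int G a + ennreal (integral {a..b} G)"
proof -
  have [measurable]: "G \<in> borel_measurable borel"
    using assms(1) by (rule borel_measurable_mono)
  have "indicator {..b} t = (indicator {..a} t + indicator {a<..b} t :: ennreal)" for t
    using assms(3) by (auto simp: indicator_def)
  then have "lower_int G b = lower_int G a + (\<integral>\<^sup>+t. ennreal (G t) * indicator {a<..b} t \<partial>lborel)"
    unfolding lower_int_def by (simp add: distrib_left nn_integral_add)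
  then show ?thesis
    using assms by (simp add: nn_integral_Ioc_eq_integral mono_integrable_on_interval)
qed

text \<open>\<open>enn2real\<close> sends an infinite integral to \<open>0\<close>; the lemmas below use \<open>cumulative_integral G x\<close>
  only where \<open>lower_int G x\<close> is finite.\<close>

definition cumulative_integral :: "(real \<Rightarrow> real) \<Rightarrow> real \<Rightarrow> real" where
  "cumulative_integral G x = enn2real (lower_int G x)"

lemma cumulative_integral_add:
  fixes G :: "real \<Rightarrow> real"
  assumes "mono G" "\<And>x. 0 \<le> G x" "lower_int G c \<noteq> \<infinity>" "a \<le> b" "b \<le> c"
  shows "cumulative_integral G b = cumulative_integral G a + integral {a..b} G"
proof -
  have "lower_int G c = lower_int G b + ennreal (integral {b..c} G)"
    by (rule lower_int_add_integral[OF assms(1,2,5)])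
  then have "lower_int G b < \<infinity>"
    using assms(3) by (simp add: less_top)
  moreover have split: "lower_int G b = lower_int G a + ennreal (integral {a..b} G)"
    by (rule lower_int_add_integral[OF assms(1,2,4)])
  ultimately have "lower_int G a < \<infinity>"
    by (simp add: less_top)
  moreover have "0 \<le> integral {a..b} G"
    using assms(2) by (simp add: integral_nonneg mono_integrable_on_interval[OF assms(1)])
  ultimately show ?thesis
    unfolding cumulative_integral_def split by (simp add: enn2real_plus)
qed

lemma cumulative_integral_continuous_on:
  fixes G :: "real \<Rightarrow> real"
  assumes "mono G" "\<And>x. 0 \<le> G x" "lower_int G b \<noteq> \<infinity>"
  shows "continuous_on {a..b} (cumulative_integral G)"
proof -
  have "continuous_on {a..b} (\<lambda>x. cumulative_integral G b - integral {x..b} G)"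
    by (intro continuous_intros indefinite_integral_continuous_1' mono_integrable_on_interval assms(1))
  then show ?thesis
    by (rule continuous_on_eq) (use cumulative_integral_add[OF assms, of _ b] in force)
qed

lemma cumulative_integral_has_real_derivative:
  fixes G :: "real \<Rightarrow> real"
  assumes "mono G" "\<And>x. 0 \<le> G x" "lower_int G b \<noteq> \<infinity>" "x < b" "isCont G x"
  shows "(cumulative_integral G has_real_derivative G x) (at x)"
proof -
  let ?a = "x - 1"
  have "((\<lambda>y. integral {?a..y} G) has_real_derivative G x) (at x within {?a..b})"
    using integral_has_vector_derivative_continuous_at[of G ?a b x "{}"] assms(4,5)
    by (simp add: mono_integrable_on_interval[OF assms(1)] continuous_at_imp_continuous_within
        has_real_derivative_iff_has_vector_derivative)
  moreover have "x \<in> interior {?a..b}"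
    using assms(4) by simp
  ultimately have "((\<lambda>y. integral {?a..y} G) has_real_derivative G x) (at x)"
    by (metis at_within_interior)
  then have "((\<lambda>y. cumulative_integral G ?a + integral {?a..y} G) has_real_derivative G x) (at x)"
    using DERIV_add[OF DERIV_const[of "cumulative_integral G ?a"]] by simp
  then show ?thesis
  proof (rule has_field_derivative_transform_within_open[where S = "{?a<..<b}"])
    show "x \<in> {?a<..<b}"
      using assms(4) by simp
    show "cumulative_integral G ?a + integral {?a..y} G = cumulative_integral G y" if "y \<in> {?a<..<b}" for y
      using cumulative_integral_add[OF assms(1-3), of ?a y] that by simp
  qed simp
qed

lemma tight_bidding_profileD:
  assumes "tight_bidding_profile \<rho> chi G"
  shows "mono G" "\<And>x. 0 \<le> G x" "lower_int G 1 \<noteq> \<infinity>" "cumulative_integral G 1 = chi"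
    "\<And>x. x \<le> 0 \<Longrightarrow> cumulative_integral G (x + 1) = \<rho> * G x"
proof -
  have "mono G" "1 < chi" "chi \<le> \<rho>" "\<And>x. 0 < G x" "lower_int G 1 = ennreal chi"
    "\<And>x. x \<le> 0 \<Longrightarrow> lower_int G (x + 1) = ennreal (\<rho> * G x)"
    using assms unfolding tight_bidding_profile_def bidding_profile_def by auto
  then show "mono G" "\<And>x. 0 \<le> G x" "lower_int G 1 \<noteq> \<infinity>" "cumulative_integral G 1 = chi"
    "\<And>x. x \<le> 0 \<Longrightarrow> cumulative_integral G (x + 1) = \<rho> * G x"
    by (auto simp: cumulative_integral_def less_imp_le)
qed

lemma tight_profile_delay_equation:
  fixes s chi x :: real and G :: "real \<Rightarrow> real"
  assumes "0 < s" "tight_bidding_profile (exp s / s) chi G" "x < 0"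
  defines "u \<equiv> \<lambda>x. exp (- s * x) * cumulative_integral G x"
  shows "(u has_real_derivative s * (u (x + 1) - u x)) (at x)"
proof -
  note G = tight_bidding_profileD[OF assms(2)]
  have "continuous_on {x - 1..0} (\<lambda>y. s / exp s * cumulative_integral G (y + 1))"
    by (intro continuous_intros continuous_on_compose2[OF cumulative_integral_continuous_on[OF G(1-3)]])
      auto
  then have "continuous_on {x - 1..0} G"
    by (rule continuous_on_eq) (use G(5) \<open>0 < s\<close> in simp)
  then have "isCont G x"
    using \<open>x < 0\<close> by (intro continuous_on_interior[of "{x - 1..0}"]) auto
  then have "(cumulative_integral G has_real_derivative G x) (at x)"
    using \<open>x < 0\<close> by (intro cumulative_integral_has_real_derivative[OF G(1-3)]) auto
  then have "(u has_real_derivative - s * u x + exp (- s * x) * G x) (at x)"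
    unfolding u_def by (auto intro!: derivative_eq_intros simp: algebra_simps)
  moreover have "exp (- s * x) * G x = s * u (x + 1)"
    using G(5)[of x] \<open>x < 0\<close> \<open>0 < s\<close>
    by (simp add: u_def field_simps exp_add[symmetric] exp_minus)
  ultimately show ?thesis
    by (simp add: algebra_simps)
qed

lemma tight_profile_window_integral_le:
  fixes s chi :: real and G :: "real \<Rightarrow> real"
  assumes "0 < s" "s \<le> 1" "tight_bidding_profile (exp s / s) chi G"
  shows "s * integral {0..1} (\<lambda>x. exp (- s * x) * cumulative_integral G x) \<le> cumulative_integral G 0"
proof -
  note G = tight_bidding_profileD[OF assms(3)]
  define u where "u = (\<lambda>x. exp (- s * x) * cumulative_integral G x)"
  have "s * integral {0..1} u \<le> u 0"
  proof (rule delay_equation_window_integral_le[OF assms(2)])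
    show "continuous_on {L..1} u" for L
      unfolding u_def by (intro continuous_intros cumulative_integral_continuous_on[OF G(1-3)])
    show "0 \<le> u x" for x
      by (simp add: u_def cumulative_integral_def)
    show "(u has_real_derivative s * (u (x + 1) - u x)) (at x)" if "x < 0" for x
      using tight_profile_delay_equation[OF assms(1,3) that] by (simp add: u_def)
  qed
  then show ?thesis
    by (simp add: u_def)
qed

lemma tight_profile_exp_weighted_integral:
  fixes s chi :: real and G :: "real \<Rightarrow> real"
  assumes "0 \<le> s" "tight_bidding_profile \<rho> chi G"
  shows "((\<lambda>x. exp (- s * x) * G x) has_integral
    exp (- s) * chi - cumulative_integral G 0 + s * integral {0..1} (\<lambda>x. exp (- s * x) * cumulative_integral G x))
    {0..1}"
proof -
  note G = tight_bidding_profileD[OF assms(2)]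
  have "((\<lambda>x. exp (- s * x)) has_real_derivative - s * exp (- s * x)) (at x)" for x
    by (auto intro!: derivative_eq_intros)
  then have "((\<lambda>x. exp (- s * x) * G x) has_integral exp (- s * 1) * cumulative_integral G 1
      - exp (- s * 0) * cumulative_integral G 0
      - integral {0..1} (\<lambda>x. - s * exp (- s * x) * cumulative_integral G x)) {0..1}"
    using assms(1) G(1,2)
    by (intro integration_by_parts_nonincreasing_weight[where F = "cumulative_integral G"
        and w = "\<lambda>x. exp (- s * x)" and w' = "\<lambda>x. - s * exp (- s * x)"])
      (auto simp: borel_measurable_mono mono_integrable_on_interval cumulative_integral_add[OF G(1-3)]
        intro!: continuous_intros)
  then show ?thesis
    by (simp add: G(4) mult.assoc)
qed

theorem lemma8:
  fixes s chi :: real and G \<phi> :: "real \<Rightarrow> real"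
  assumes "0 < s" "s \<le> 1"
    and "\<forall>x\<in>{0<..1}. 1 \<le> \<phi> x"
    and "set_integrable lborel {0<..1} \<phi>"
    and "tight_bidding_profile (exp s / s) chi G"
    and "induced_by G \<phi>"
  shows "chi \<ge> exp s * (LINT x:{0<..1}|lborel. exp (- s * x) * \<phi> x)"
proof -
  have "set_integrable lborel {0<..1} (\<lambda>x. exp (- s * x) * \<phi> x)"
    using assms(1) by (intro set_integrable_mult_bounded[OF assms(4), of _ 1]) auto
  then have "(LINT x:{0<..1}|lborel. exp (- s * x) * \<phi> x) = integral {0<..1} (\<lambda>x. exp (- s * x) * \<phi> x)"
    by (rule set_borel_integral_eq_integral)
  also have "\<dots> = integral {0..1} (\<lambda>x. exp (- s * x) * G x)"
    using assms(6) unfolding integral_Ioc_eq_Icc[symmetric]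
    by (intro integral_cong) (simp add: induced_by_def)
  also have "\<dots> = exp (- s) * chi - cumulative_integral G 0
      + s * integral {0..1} (\<lambda>x. exp (- s * x) * cumulative_integral G x)"
    using tight_profile_exp_weighted_integral[OF _ assms(5)] assms(1) by (simp add: integral_unique)
  also have "\<dots> \<le> exp (- s) * chi"
    using tight_profile_window_integral_le[OF assms(1,2,5)] by simp
  finally show ?thesis
    by (simp add: exp_minus field_simps)
qed

end
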